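(* Let $h>0$, $0<\alpha\le 0.1$, and let $\overline S=\{(kh,h):k\in\mathbb Z\}\subseteq S$ be the camera grid of resolution $\delta_d=h$. For every target $g\in G$, $$\overline\varepsilon(g)\;\le\;1.72\,\varepsilon(g,S),\qquad\text{where }\ \overline\varepsilon(g)=\min_{s_i,s_j\in\overline S}\varepsilon(g,\{s_i,s_j\}).$$
   Context: Work in $\mathbb{R}^2$ with coordinates $(x,z)$. The ground line is $G=\{z=0\}$ and the viewing line is $S=\{z=h\}$. For a point $s$ and unit vector $u$, the wedge $W(s,u)=\{s+rv:\ r\ge0,\ |v|=1,\ \angle(v,u)\le\alpha\}$ (opening angle $2\alpha$). For target $g$ and camera $s$, $\mathcal W(g,s)$ is the set of all wedges $W(s,u)$ containing $g$. For $C\subseteq S$, $\varepsilon(g,C)=\sup\{\operatorname{diam}(\bigcap_{s\in C}W_s): W_s\in\mathcal W(g,s)\ \forall s\in C\}$. *)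

theory Defs
  imports "HOL-Analysis.Analysis"
begin

type_synonym pt = "real \<times> real"  (* (x,z) *)

definition vec_angle :: "pt \<Rightarrow> pt \<Rightarrow> real" where
  "vec_angle v u = arccos ((v \<bullet> u) / (norm v * norm u))"

definition wedge :: "real \<Rightarrow> pt \<Rightarrow> pt \<Rightarrow> pt set" where
  "wedge \<alpha> s u = {s + r *\<^sub>R v | r v. r \<ge> 0 \<and> norm v = 1 \<and> vec_angle v u \<le> \<alpha>}"

definition wedges :: "real \<Rightarrow> pt \<Rightarrow> pt \<Rightarrow> pt set set" where
  "wedges \<alpha> g s = {wedge \<alpha> s u | u. norm u = 1 \<and> g \<in> wedge \<alpha> s u}"

definition ediam :: "pt set \<Rightarrow> ereal" where
  "ediam A = Sup {ereal (dist x y) | x y. x \<in> A \<and> y \<in> A}"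

definition eps :: "real \<Rightarrow> pt \<Rightarrow> pt set \<Rightarrow> ereal" where
  "eps \<alpha> g C = Sup {ediam (\<Inter>s\<in>C. W s) | W. \<forall>s\<in>C. W s \<in> wedges \<alpha> g s}"

definition ground :: "pt set" where "ground = {p. snd p = 0}"
definition viewline :: "real \<Rightarrow> pt set" where "viewline h = {p. snd p = h}"
definition grid :: "real \<Rightarrow> pt set" where "grid h = {(of_int k * h, h) | k. True}"

end

theory Submission
  imports Defs
begin

text \<open>Lower bound: below a ground target \<open>g\<close> put \<open>p = g - (0, 4\<alpha>h(1 + 2\<alpha>))\<close>. Every camera
  on the viewing line sees the segment \<open>gp\<close> under an angle at most \<open>2\<alpha>\<close>, so one admissible
  wedge per camera contains both points and \<open>\<epsilon>(g, S) \<ge> |gp|\<close>.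

  Upper bound: take the two grid cameras two cells apart whose midpoint is the grid point
  nearest to \<open>g\<close>. They see \<open>g\<close> along nearly orthogonal directions, and each admissible axis
  is within \<open>\<alpha>\<close> of the direction to \<open>g\<close>, so \<open>|u\<^sub>1 \<cdot> u\<^sub>2| \<le> 1/8 + 2\<alpha>\<close>.
  For \<open>p, q\<close> in a wedge the component of \<open>q - p\<close> across its axis is at most
  \<open>tan \<alpha> (|p - s| + |q - s|)\<close>; for transversal axes the two cross components control
  \<open>|q - p|\<close> (a Lagrange identity). Applied first with \<open>q = g\<close> this shows that the intersection
  lies within \<open>7.7\<alpha>h\<close> of \<open>g\<close>, and applied again it bounds its diameter by
  \<open>1.72 \<cdot> 4\<alpha>h(1 + 2\<alpha>)\<close>.\<close>

lemma cos_ge_one_minus_half_sq: "1 - x\<^sup>2 / 2 \<le> cos (x :: real)"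
proof -
  have "(sin (x / 2))\<^sup>2 \<le> (x / 2)\<^sup>2"
    using abs_sin_x_le_abs_x[of "x / 2"] by (metis abs_ge_zero power2_abs power_mono)
  then show ?thesis using cos_double_sin[of "x / 2"] by (simp add: power_divide)
qed

lemma x_cos_le_sin:
  assumes "0 \<le> x" "x \<le> pi"
  shows "x * cos x \<le> sin x"
proof -
  have "sin 0 - 0 * cos 0 \<le> sin x - x * cos x"
  proof (rule deriv_nonneg_imp_mono[where g = "\<lambda>y. sin y - y * cos y" and g' = "\<lambda>y. y * sin y"])
    fix y assume "y \<in> {0..x}"
    then show "0 \<le> y * sin y" using assms by (simp add: sin_ge_zero)
  next
    fix y
    show "((\<lambda>y. sin y - y * cos y) has_real_derivative y * sin y) (at y)"
      by (auto intro!: derivative_eq_intros)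
  qed (use assms in simp)
  then show ?thesis by simp
qed

section \<open>Wedges as cones in the plane\<close>

definition cross :: "pt \<Rightarrow> pt \<Rightarrow> real" where
  "cross v w = fst v * snd w - snd v * fst w"

lemma norm_pt: "norm (p :: pt) = sqrt ((fst p)\<^sup>2 + (snd p)\<^sup>2)"
  by (simp add: norm_prod_def)

lemma inner_pt: "inner (p :: pt) q = fst p * fst q + snd p * snd q"
  by (simp add: inner_prod_def)

lemma power2_norm_pt: "(norm (p :: pt))\<^sup>2 = (fst p)\<^sup>2 + (snd p)\<^sup>2"
  by (simp add: norm_pt)

lemma inner_sq_add_cross_sq: "(inner v w)\<^sup>2 + (cross v w)\<^sup>2 = (norm v)\<^sup>2 * (norm w)\<^sup>2"
  unfolding power2_norm_pt inner_pt cross_def by algebra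

lemma cross_lagrange_units:
  assumes "norm (u1 :: pt) = 1" "norm (u2 :: pt) = 1"
  shows "(norm d)\<^sup>2 * (1 - (inner u1 u2)\<^sup>2)
           = (cross u1 d)\<^sup>2 + (cross u2 d)\<^sup>2 - 2 * cross u1 d * cross u2 d * inner u1 u2"
proof -
  have "(fst u1)\<^sup>2 + (snd u1)\<^sup>2 = 1" "(fst u2)\<^sup>2 + (snd u2)\<^sup>2 = 1"
    using assms by (simp_all add: power2_norm_pt[symmetric])
  then show ?thesis unfolding power2_norm_pt inner_pt cross_def by algebra
qed

lemma mem_wedge_iff:
  assumes u: "norm u = 1" and "0 \<le> \<alpha>" "\<alpha> \<le> pi"
  shows "q \<in> wedge \<alpha> s u \<longleftrightarrow> norm (q - s) * cos \<alpha> \<le> inner (q - s) u"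
proof
  assume "q \<in> wedge \<alpha> s u"
  then obtain r v where q: "q = s + r *\<^sub>R v" and r: "r \<ge> 0" and v: "norm v = 1"
    and angle: "arccos (inner v u) \<le> \<alpha>"
    using u unfolding wedge_def vec_angle_def by auto
  have bound: "\<bar>inner v u\<bar> \<le> 1" using Cauchy_Schwarz_ineq2[of v u] v u by simp
  have "cos \<alpha> \<le> cos (arccos (inner v u))"
    using angle bound assms(3) arccos_lbound by (intro cos_monotone_0_pi_le) auto
  then have "cos \<alpha> \<le> inner v u" using bound by (simp add: cos_arccos_abs)
  then show "norm (q - s) * cos \<alpha> \<le> inner (q - s) u"
    using q r v by (simp add: mult_left_mono)
next
  assume le: "norm (q - s) * cos \<alpha> \<le> inner (q - s) u"
  define w where "w = q - s"
  define v where "v = (if w = 0 then u else sgn w)"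
  have v: "norm v = 1" using u by (simp add: v_def norm_sgn)
  have q: "q = s + norm w *\<^sub>R v" by (auto simp: w_def v_def sgn_div_norm)
  have "cos \<alpha> \<le> inner v u"
  proof (cases "w = 0")
    case True
    then show ?thesis using u by (simp add: v_def power2_norm_eq_inner[symmetric])
  next
    case False
    have "inner v u = inner w u / norm w" using False by (simp add: v_def sgn_div_norm divide_inverse_commute)
    then show ?thesis using le False by (simp add: w_def pos_le_divide_eq mult.commute)
  qed
  then have "arccos (inner v u) \<le> arccos (cos \<alpha>)"
    using Cauchy_Schwarz_ineq2[of v u] v u by (intro arccos_le_arccos) auto
  then have "vec_angle v u \<le> \<alpha>" using v u assms by (simp add: vec_angle_def arccos_cos)
  then show "q \<in> wedge \<alpha> s u" unfolding wedge_def using q v norm_ge_zero by blast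
qed

lemma cos_mul_abs_cross_le:
  assumes u: "norm u = 1" and cone: "norm v * cos \<alpha> \<le> inner v u"
    and "0 \<le> \<alpha>" "\<alpha> < pi / 2"
  shows "cos \<alpha> * \<bar>cross u v\<bar> \<le> sin \<alpha> * inner v u"
proof -
  have c: "0 < cos \<alpha>" and s: "0 \<le> sin \<alpha>" using assms by (auto intro: cos_gt_zero_pi sin_ge_zero)
  have m: "0 \<le> inner v u" using cone c by (meson norm_ge_zero order_trans mult_nonneg_nonneg less_imp_le)
  have lagrange: "(norm v)\<^sup>2 = (inner v u)\<^sup>2 + (cross u v)\<^sup>2"
    using inner_sq_add_cross_sq[of u v] u by (simp add: inner_commute)
  have "(norm v * cos \<alpha>)\<^sup>2 \<le> (inner v u)\<^sup>2"
    using cone c by (intro power_mono) simp_all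
  then have "(cos \<alpha>)\<^sup>2 * ((inner v u)\<^sup>2 + (cross u v)\<^sup>2) \<le> (inner v u)\<^sup>2"
    unfolding lagrange power_mult_distrib by (simp add: mult.commute)
  then have "(cos \<alpha>)\<^sup>2 * (cross u v)\<^sup>2 \<le> (sin \<alpha>)\<^sup>2 * (inner v u)\<^sup>2"
    unfolding sin_squared_eq by (simp add: algebra_simps)
  then have "(cos \<alpha> * \<bar>cross u v\<bar>)\<^sup>2 \<le> (sin \<alpha> * inner v u)\<^sup>2"
    by (simp add: power_mult_distrib)
  then show ?thesis by (rule power2_le_imp_le) (use s m in simp)
qed

lemma wedge_cross_diff_le:
  assumes u: "norm u = 1" and \<alpha>: "0 \<le> \<alpha>" "\<alpha> < pi / 2"
    and p: "p \<in> wedge \<alpha> s u" and q: "q \<in> wedge \<alpha> s u"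
  shows "cos \<alpha> * \<bar>cross u (q - p)\<bar> \<le> sin \<alpha> * (norm (p - s) + norm (q - s))"
proof -
  have c: "0 < cos \<alpha>" and sin: "0 \<le> sin \<alpha>" using \<alpha> by (auto intro: cos_gt_zero_pi sin_ge_zero)
  have bound: "cos \<alpha> * \<bar>cross u (x - s)\<bar> \<le> sin \<alpha> * norm (x - s)" if "x \<in> wedge \<alpha> s u" for x
  proof -
    have "cos \<alpha> * \<bar>cross u (x - s)\<bar> \<le> sin \<alpha> * inner (x - s) u"
      using that \<alpha> by (intro cos_mul_abs_cross_le[OF u]) (auto simp: mem_wedge_iff[OF u])
    also have "\<dots> \<le> sin \<alpha> * norm (x - s)"
      using Cauchy_Schwarz_ineq2[of "x - s" u] u sin by (intro mult_left_mono) auto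
    finally show ?thesis .
  qed
  have "cross u (q - p) = cross u (q - s) - cross u (p - s)"
    by (simp add: cross_def algebra_simps)
  then have "cos \<alpha> * \<bar>cross u (q - p)\<bar> \<le> cos \<alpha> * \<bar>cross u (q - s)\<bar> + cos \<alpha> * \<bar>cross u (p - s)\<bar>"
    using c by (simp add: distrib_left[symmetric] mult_left_mono)
  then show ?thesis using bound[OF p] bound[OF q] by (simp add: algebra_simps)
qed

lemma two_wedges_dist_le:
  assumes u1: "norm u1 = 1" and u2: "norm u2 = 1"
    and \<kappa>: "\<bar>inner u1 u2\<bar> \<le> \<kappa>" and \<alpha>: "0 \<le> \<alpha>" "\<alpha> < pi / 2"
    and p1: "p \<in> wedge \<alpha> s1 u1" and q1: "q \<in> wedge \<alpha> s1 u1"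
    and p2: "p \<in> wedge \<alpha> s2 u2" and q2: "q \<in> wedge \<alpha> s2 u2"
    and B1: "norm (p - s1) + norm (q - s1) \<le> B1"
    and B2: "norm (p - s2) + norm (q - s2) \<le> B2"
  shows "(cos \<alpha>)\<^sup>2 * (norm (q - p))\<^sup>2 * (1 - \<kappa>\<^sup>2)
           \<le> (sin \<alpha>)\<^sup>2 * (B1\<^sup>2 + B2\<^sup>2 + 2 * \<kappa> * B1 * B2)"
proof -
  define x1 where "x1 = cross u1 (q - p)"
  define x2 where "x2 = cross u2 (q - p)"
  have c: "0 < cos \<alpha>" and s: "0 \<le> sin \<alpha>" using \<alpha> by (auto intro: cos_gt_zero_pi sin_ge_zero)
  have k0: "0 \<le> \<kappa>" using \<kappa> by linarith
  have h1: "cos \<alpha> * \<bar>x1\<bar> \<le> sin \<alpha> * B1"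
    using wedge_cross_diff_le[OF u1 \<alpha> p1 q1] B1 s unfolding x1_def
    by (meson mult_left_mono order_trans)
  have h2: "cos \<alpha> * \<bar>x2\<bar> \<le> sin \<alpha> * B2"
    using wedge_cross_diff_le[OF u2 \<alpha> p2 q2] B2 s unfolding x2_def
    by (meson mult_left_mono order_trans)
  have "(inner u1 u2)\<^sup>2 \<le> \<kappa>\<^sup>2" using power_mono[OF \<kappa>, of 2] by simp
  then have "(norm (q - p))\<^sup>2 * (1 - \<kappa>\<^sup>2) \<le> (norm (q - p))\<^sup>2 * (1 - (inner u1 u2)\<^sup>2)"
    by (simp add: mult_left_mono)
  also have "\<dots> = x1\<^sup>2 + x2\<^sup>2 - 2 * x1 * x2 * inner u1 u2"
    unfolding x1_def x2_def by (rule cross_lagrange_units[OF u1 u2])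
  also have "\<dots> \<le> x1\<^sup>2 + x2\<^sup>2 + 2 * \<kappa> * \<bar>x1\<bar> * \<bar>x2\<bar>"
  proof -
    have "- (x1 * x2 * inner u1 u2) \<le> \<bar>x1\<bar> * \<bar>x2\<bar> * \<bar>inner u1 u2\<bar>"
      by (metis abs_ge_minus_self abs_mult)
    also have "\<dots> \<le> \<bar>x1\<bar> * \<bar>x2\<bar> * \<kappa>" using \<kappa> by (simp add: mult_left_mono)
    finally show ?thesis by (simp add: algebra_simps)
  qed
  finally have A: "(norm (q - p))\<^sup>2 * (1 - \<kappa>\<^sup>2) \<le> x1\<^sup>2 + x2\<^sup>2 + 2 * \<kappa> * \<bar>x1\<bar> * \<bar>x2\<bar>" .
  have e1: "(cos \<alpha> * \<bar>x1\<bar>)\<^sup>2 \<le> (sin \<alpha> * B1)\<^sup>2" using h1 c by (simp add: power_mono)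
  have e2: "(cos \<alpha> * \<bar>x2\<bar>)\<^sup>2 \<le> (sin \<alpha> * B2)\<^sup>2" using h2 c by (simp add: power_mono)
  have e3: "(cos \<alpha> * \<bar>x1\<bar>) * (cos \<alpha> * \<bar>x2\<bar>) \<le> (sin \<alpha> * B1) * (sin \<alpha> * B2)"
  proof (rule mult_mono[OF h1 h2])
    show "0 \<le> sin \<alpha> * B1" using h1 c by (meson abs_ge_zero mult_nonneg_nonneg less_imp_le order_trans)
  qed (use c in simp)
  have "(cos \<alpha>)\<^sup>2 * ((norm (q - p))\<^sup>2 * (1 - \<kappa>\<^sup>2)) \<le> (cos \<alpha>)\<^sup>2 * (x1\<^sup>2 + x2\<^sup>2 + 2 * \<kappa> * \<bar>x1\<bar> * \<bar>x2\<bar>)"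
    using A by (simp add: mult_left_mono)
  also have "\<dots> = (cos \<alpha> * \<bar>x1\<bar>)\<^sup>2 + (cos \<alpha> * \<bar>x2\<bar>)\<^sup>2 + 2 * \<kappa> * ((cos \<alpha> * \<bar>x1\<bar>) * (cos \<alpha> * \<bar>x2\<bar>))"
    by (simp add: power2_eq_square algebra_simps)
  also have "\<dots> \<le> (sin \<alpha> * B1)\<^sup>2 + (sin \<alpha> * B2)\<^sup>2 + 2 * \<kappa> * ((sin \<alpha> * B1) * (sin \<alpha> * B2))"
    using e1 e2 e3 k0 by (simp add: add_mono mult_left_mono)
  also have "\<dots> = (sin \<alpha>)\<^sup>2 * (B1\<^sup>2 + B2\<^sup>2 + 2 * \<kappa> * B1 * B2)"
    by (simp add: power2_eq_square algebra_simps)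
  finally show ?thesis by (simp add: algebra_simps)
qed

text \<open>The axis is the bisector of the two directions.\<close>

lemma common_wedge_exists:
  assumes "v1 \<noteq> 0" "v2 \<noteq> 0" and c: "0 < cos \<alpha>"
    and angle: "cos (2 * \<alpha>) * (norm v1 * norm v2) \<le> inner v1 v2"
  shows "\<exists>u. norm u = 1 \<and> norm v1 * cos \<alpha> \<le> inner v1 u \<and> norm v2 * cos \<alpha> \<le> inner v2 u"
proof -
  define e1 where "e1 = sgn v1"
  define e2 where "e2 = sgn v2"
  define F where "F = inner e1 e2"
  have n1: "norm v1 > 0" and n2: "norm v2 > 0" using assms by simp_all
  have e1: "inner e1 e1 = 1" and e2: "inner e2 e2 = 1"
    using assms by (simp_all add: e1_def e2_def norm_sgn flip: power2_norm_eq_inner)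
  have "F = inner v1 v2 / (norm v1 * norm v2)"
    by (simp add: F_def e1_def e2_def sgn_div_norm divide_inverse inverse_mult_distrib mult_ac)
  then have FE: "2 * (cos \<alpha>)\<^sup>2 - 1 \<le> F"
    using angle n1 n2 by (simp add: pos_le_divide_eq cos_double_cos)
  have "0 < 2 * (cos \<alpha>)\<^sup>2" using c by simp
  then have F1: "0 < 1 + F" using FE by linarith
  define n where "n = norm (e1 + e2)"
  have n_sq: "n\<^sup>2 = 2 + 2 * F"
    unfolding n_def F_def power2_norm_eq_inner
    by (simp add: inner_add_left inner_add_right inner_commute e1 e2)
  then have "n \<noteq> 0" using F1 by auto
  then have n: "0 < n" by (simp add: n_def)
  define u where "u = (1 / n) *\<^sub>R (e1 + e2)"
  have "inner e1 u = (1 + F) / n" "inner e2 u = (1 + F) / n"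
    by (simp_all add: u_def F_def inner_add_right inner_commute e1 e2)
  moreover have "cos \<alpha> \<le> (1 + F) / n"
  proof -
    have "(cos \<alpha> * n)\<^sup>2 = (2 * (cos \<alpha>)\<^sup>2) * (1 + F)"
      by (simp add: power_mult_distrib n_sq algebra_simps)
    also have "\<dots> \<le> (1 + F) * (1 + F)" using FE F1 by (intro mult_right_mono) auto
    finally have "(cos \<alpha> * n)\<^sup>2 \<le> (1 + F)\<^sup>2" by (simp add: power2_eq_square)
    then have "cos \<alpha> * n \<le> 1 + F" by (rule power2_le_imp_le) (use F1 in simp)
    then show ?thesis using n by (simp add: pos_le_divide_eq)
  qed
  ultimately have "cos \<alpha> \<le> inner e1 u" "cos \<alpha> \<le> inner e2 u" by simp_all
  then have "norm v1 * cos \<alpha> \<le> inner v1 u" "norm v2 * cos \<alpha> \<le> inner v2 u"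
    using n1 n2
    by (simp_all add: e1_def e2_def sgn_div_norm divide_inverse_commute[symmetric] pos_le_divide_eq mult.commute)
  moreover have "norm u = 1" using n by (simp add: u_def n_def)
  ultimately show ?thesis by blast
qed

lemma wedge_axis_near_direction:
  assumes u: "norm u = 1" and q: "q \<in> wedge \<alpha> s u" "q \<noteq> s" and "0 \<le> \<alpha>" "\<alpha> \<le> pi"
  shows "norm (u - sgn (q - s)) \<le> \<alpha>"
proof -
  define e where "e = sgn (q - s)"
  have "norm (q - s) * cos \<alpha> \<le> inner (q - s) u" using q mem_wedge_iff[OF u assms(4,5)] by blast
  then have ce: "cos \<alpha> \<le> inner e u"
    using q(2) by (simp add: e_def sgn_div_norm divide_inverse_commute[symmetric] pos_le_divide_eq mult.commute)
  have "inner u u = 1" "inner e e = 1"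
    using u q(2) by (simp_all add: e_def norm_sgn flip: power2_norm_eq_inner)
  then have "(norm (u - e))\<^sup>2 = 2 - 2 * inner e u"
    unfolding power2_norm_eq_inner by (simp add: inner_diff_left inner_diff_right inner_commute)
  also have "\<dots> \<le> \<alpha>\<^sup>2" using ce cos_ge_one_minus_half_sq[of \<alpha>] by linarith
  finally show ?thesis unfolding e_def by (rule power2_le_imp_le) (use assms in simp)
qed

lemma abs_inner_perturb:
  fixes u1 u2 e1 e2 :: pt
  assumes "norm u2 = 1" "norm e1 = 1" "norm (u1 - e1) \<le> \<delta>" "norm (u2 - e2) \<le> \<delta>"
  shows "\<bar>inner u1 u2\<bar> \<le> \<bar>inner e1 e2\<bar> + 2 * \<delta>"
proof -
  have "inner u1 u2 = inner e1 e2 + inner (u1 - e1) u2 + inner e1 (u2 - e2)"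
    by (simp add: inner_diff_left inner_diff_right)
  moreover have "\<bar>inner (u1 - e1) u2\<bar> \<le> \<delta>" "\<bar>inner e1 (u2 - e2)\<bar> \<le> \<delta>"
    using Cauchy_Schwarz_ineq2[of "u1 - e1" u2] Cauchy_Schwarz_ineq2[of e1 "u2 - e2"] assms by simp_all
  ultimately show ?thesis by linarith
qed

lemma cos_mul_norms_le_inner:
  assumes dot: "0 \<le> inner v w" and c: "0 \<le> cos \<beta>"
    and cross: "cos \<beta> * \<bar>cross v w\<bar> \<le> sin \<beta> * inner v w"
  shows "cos \<beta> * (norm v * norm w) \<le> inner v w"
proof -
  have "(cos \<beta> * \<bar>cross v w\<bar>)\<^sup>2 \<le> (sin \<beta> * inner v w)\<^sup>2" using cross c by (intro power_mono) simp_all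
  then have "(cos \<beta>)\<^sup>2 * ((inner v w)\<^sup>2 + (cross v w)\<^sup>2) \<le> (inner v w)\<^sup>2"
    by (simp add: power_mult_distrib sin_squared_eq algebra_simps)
  then have "(cos \<beta> * (norm v * norm w))\<^sup>2 \<le> (inner v w)\<^sup>2"
    by (simp add: power_mult_distrib inner_sq_add_cross_sq)
  then show ?thesis by (rule power2_le_imp_le) (use dot in simp)
qed

lemma eps_ge_dist:
  assumes "\<And>s. s \<in> C \<Longrightarrow> \<exists>u. norm u = 1 \<and> g \<in> wedge \<alpha> s u \<and> p \<in> wedge \<alpha> s u"
  shows "ereal (dist g p) \<le> eps \<alpha> g C"
proof -
  obtain U where U: "\<And>s. s \<in> C \<Longrightarrow> norm (U s) = 1 \<and> g \<in> wedge \<alpha> s (U s) \<and> p \<in> wedge \<alpha> s (U s)"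
    using assms by metis
  define W where "W s = wedge \<alpha> s (U s)" for s
  have "g \<in> (\<Inter>s\<in>C. W s)" "p \<in> (\<Inter>s\<in>C. W s)" using U by (auto simp: W_def)
  then have "ereal (dist g p) \<le> ediam (\<Inter>s\<in>C. W s)"
    unfolding ediam_def by (intro Sup_upper) blast
  also have "\<dots> \<le> eps \<alpha> g C"
  proof -
    have "\<forall>s\<in>C. W s \<in> wedges \<alpha> g s" using U unfolding W_def wedges_def by blast
    then show ?thesis unfolding eps_def by (intro Sup_upper) blast
  qed
  finally show ?thesis .
qed

lemma eps_pair_le:
  assumes "\<And>u1 u2 p q. norm u1 = 1 \<Longrightarrow> norm u2 = 1 \<Longrightarrow> g \<in> wedge \<alpha> s1 u1 \<Longrightarrow> g \<in> wedge \<alpha> s2 u2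
      \<Longrightarrow> p \<in> wedge \<alpha> s1 u1 \<Longrightarrow> p \<in> wedge \<alpha> s2 u2 \<Longrightarrow> q \<in> wedge \<alpha> s1 u1 \<Longrightarrow> q \<in> wedge \<alpha> s2 u2
      \<Longrightarrow> dist p q \<le> T"
  shows "eps \<alpha> g {s1, s2} \<le> ereal T"
  unfolding eps_def
proof (rule Sup_least, clarify)
  fix W assume "\<forall>s\<in>{s1, s2}. W s \<in> wedges \<alpha> g s"
  then obtain u1 u2 where u1: "W s1 = wedge \<alpha> s1 u1" "norm u1 = 1" "g \<in> wedge \<alpha> s1 u1"
    and u2: "W s2 = wedge \<alpha> s2 u2" "norm u2 = 1" "g \<in> wedge \<alpha> s2 u2"
    unfolding wedges_def by auto
  have "(\<Inter>s\<in>{s1, s2}. W s) = wedge \<alpha> s1 u1 \<inter> wedge \<alpha> s2 u2" using u1 u2 by simp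
  then show "ediam (\<Inter>s\<in>{s1, s2}. W s) \<le> ereal T"
    unfolding ediam_def using assms[OF u1(2) u2(2) u1(3) u2(3)] by (intro Sup_least) auto
qed

section \<open>Lower bound for the whole viewing line\<close>

text \<open>Seen from \<open>(y, h)\<close>, the segment subtends an angle with tangent
  \<open>|X| L / (X\<^sup>2 + h (h + L)) \<le> 2\<alpha> \<le> tan (2\<alpha>)\<close>, by AM-GM in \<open>X = a - y\<close>.\<close>

lemma vertical_segment_in_one_wedge:
  fixes a y h \<alpha> :: real
  assumes h: "0 < h" and \<alpha>: "0 < \<alpha>" "\<alpha> \<le> pi / 4"
  shows "\<exists>u. norm u = 1 \<and> (a, 0) \<in> wedge \<alpha> (y, h) u
               \<and> (a, - (4 * \<alpha> * h * (1 + 2 * \<alpha>))) \<in> wedge \<alpha> (y, h) u"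
proof -
  define L where "L = 4 * \<alpha> * h * (1 + 2 * \<alpha>)"
  define X where "X = a - y"
  define v1 :: pt where "v1 = (X, - h)"
  define v2 :: pt where "v2 = (X, - (h + L))"
  have L: "0 \<le> L" using h \<alpha> by (simp add: L_def)
  have v: "v1 \<noteq> 0" "v2 \<noteq> 0" using h L by (auto simp: v1_def v2_def zero_prod_def)
  have cross: "\<bar>cross v1 v2\<bar> = \<bar>X\<bar> * L"
    using L by (simp add: cross_def v1_def v2_def algebra_simps abs_mult)
  have dot: "inner v1 v2 = X\<^sup>2 + h * (h + L)"
    by (simp add: inner_pt v1_def v2_def power2_eq_square algebra_simps)
  have sin2: "0 \<le> sin (2 * \<alpha>)" and cos2: "0 \<le> cos (2 * \<alpha>)"
    using \<alpha> by (auto intro!: sin_ge_zero cos_ge_zero)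
  have "2 * \<bar>X\<bar> * (h * (1 + 2 * \<alpha>)) \<le> X\<^sup>2 + (h * (1 + 2 * \<alpha>))\<^sup>2"
    using zero_le_power2[of "\<bar>X\<bar> - h * (1 + 2 * \<alpha>)"] unfolding power2_diff power2_abs by linarith
  also have "\<dots> \<le> X\<^sup>2 + h * (h + L)"
    using h \<alpha> by (simp add: L_def power2_eq_square algebra_simps)
  finally have amgm: "2 * \<bar>X\<bar> * (h * (1 + 2 * \<alpha>)) \<le> X\<^sup>2 + h * (h + L)" .
  have "cos (2 * \<alpha>) * \<bar>cross v1 v2\<bar> = (2 * \<alpha> * cos (2 * \<alpha>)) * (2 * \<bar>X\<bar> * (h * (1 + 2 * \<alpha>)))"
    unfolding cross L_def by (simp add: algebra_simps)
  also have "\<dots> \<le> sin (2 * \<alpha>) * (2 * \<bar>X\<bar> * (h * (1 + 2 * \<alpha>)))"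
    using x_cos_le_sin[of "2 * \<alpha>"] h \<alpha> by (intro mult_right_mono) auto
  also have "\<dots> \<le> sin (2 * \<alpha>) * inner v1 v2"
    unfolding dot using amgm sin2 by (rule mult_left_mono)
  finally have "cos (2 * \<alpha>) * (norm v1 * norm v2) \<le> inner v1 v2"
    using cos2 dot h L by (intro cos_mul_norms_le_inner) auto
  moreover have "0 < cos \<alpha>" using \<alpha> by (intro cos_gt_zero_pi) auto
  ultimately obtain u where u: "norm u = 1" "norm v1 * cos \<alpha> \<le> inner v1 u" "norm v2 * cos \<alpha> \<le> inner v2 u"
    using common_wedge_exists[OF v] by blast
  have "0 \<le> \<alpha>" "\<alpha> \<le> pi" using \<alpha> pi_gt3 by linarith+
  moreover have "(a, 0) - (y, h) = v1" "(a, - L) - (y, h) = v2" by (simp_all add: v1_def v2_def X_def)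
  ultimately show ?thesis unfolding L_def[symmetric] using u mem_wedge_iff[OF u(1)] by metis
qed

lemma eps_viewline_ge:
  assumes h: "0 < h" and \<alpha>: "0 < \<alpha>" "\<alpha> \<le> pi / 4" and g: "g \<in> ground"
  shows "ereal (4 * \<alpha> * h * (1 + 2 * \<alpha>)) \<le> eps \<alpha> g (viewline h)"
proof -
  define L where "L = 4 * \<alpha> * h * (1 + 2 * \<alpha>)"
  obtain a where ga: "g = (a, 0)" using g by (cases g) (auto simp: ground_def)
  have "dist g (a, - L) = L" using h \<alpha> by (simp add: ga L_def dist_norm norm_pt)
  moreover have "ereal (dist g (a, - L)) \<le> eps \<alpha> g (viewline h)"
  proof (rule eps_ge_dist)
    fix s assume "s \<in> viewline h"
    then have "s = (fst s, h)" by (cases s) (simp add: viewline_def)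
    then show "\<exists>u. norm u = 1 \<and> g \<in> wedge \<alpha> s u \<and> (a, - L) \<in> wedge \<alpha> s u"
      using vertical_segment_in_one_wedge[OF h \<alpha>, of a "fst s"] unfolding ga L_def by metis
  qed
  ultimately show ?thesis by (simp add: L_def)
qed

section \<open>Two grid cameras\<close>

lemma small_angle_bounds:
  fixes \<alpha> :: real
  assumes "0 < \<alpha>" "\<alpha> \<le> 1 / 10"
  shows "0 < sin \<alpha>" "sin \<alpha> \<le> \<alpha>" "99 / 100 \<le> (cos \<alpha>)\<^sup>2"
proof -
  show "0 < sin \<alpha>" using assms pi_gt3 by (intro sin_gt_zero) auto
  show "sin \<alpha> \<le> \<alpha>" using assms by (intro sin_x_le_x) auto
  have "\<alpha>\<^sup>2 \<le> (1 / 10)\<^sup>2" using assms by (intro power_mono) auto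
  then have "199 / 200 \<le> cos \<alpha>" using cos_ge_one_minus_half_sq[of \<alpha>] by (simp add: power2_eq_square)
  then have "(199 / 200)\<^sup>2 \<le> (cos \<alpha>)\<^sup>2" by (rule power_mono) simp
  then show "99 / 100 \<le> (cos \<alpha>)\<^sup>2" by (simp add: power2_eq_square)
qed

lemma camera_distance_bounds:
  fixes t :: real
  assumes t: "\<bar>t\<bar> \<le> 1 / 2"
  defines "d1 \<equiv> sqrt ((t + 1)\<^sup>2 + 1)" and "d2 \<equiv> sqrt ((t - 1)\<^sup>2 + 1)"
  shows "1 \<le> d1" "1 \<le> d2" "d1 \<le> 181 / 100" "d2 \<le> 181 / 100" "d1\<^sup>2 + d2\<^sup>2 \<le> 9 / 2"
    "d1 + d2 \<le> 3" "2 \<le> d1 * d2" "d1 * d2 \<le> 2016 / 1000"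
proof -
  have sq1: "d1\<^sup>2 = (t + 1)\<^sup>2 + 1" and sq2: "d2\<^sup>2 = (t - 1)\<^sup>2 + 1" by (simp_all add: d1_def d2_def)
  show "1 \<le> d1" "1 \<le> d2" by (simp_all add: d1_def d2_def)
  have tt: "t\<^sup>2 \<le> 1 / 4" using power_mono[OF t, of 2] by (simp add: power2_eq_square)
  have "(t + 1)\<^sup>2 \<le> (3 / 2)\<^sup>2" "(1 - t)\<^sup>2 \<le> (3 / 2)\<^sup>2" using t by (intro power_mono; linarith)+
  then have "d1\<^sup>2 \<le> (181 / 100)\<^sup>2" "d2\<^sup>2 \<le> (181 / 100)\<^sup>2"
    unfolding sq1 sq2 by (simp_all add: power2_eq_square algebra_simps)
  then show "d1 \<le> 181 / 100" "d2 \<le> 181 / 100"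
    by (metis power2_le_imp_le zero_le_divide_iff zero_le_numeral)+
  have "d1\<^sup>2 + d2\<^sup>2 = 4 + 2 * t\<^sup>2" unfolding sq1 sq2 by algebra
  then show sum: "d1\<^sup>2 + d2\<^sup>2 \<le> 9 / 2" using tt by linarith
  have "(d1 + d2)\<^sup>2 \<le> 2 * (d1\<^sup>2 + d2\<^sup>2)" using zero_le_power2[of "d1 - d2"] by (simp add: power2_eq_square algebra_simps)
  then have "(d1 + d2)\<^sup>2 \<le> 3\<^sup>2" using sum by simp
  then show "d1 + d2 \<le> 3" by (rule power2_le_imp_le) simp
  have prod: "(d1 * d2)\<^sup>2 = 4 + (t\<^sup>2)\<^sup>2" unfolding power_mult_distrib sq1 sq2 by algebra
  have "(t\<^sup>2)\<^sup>2 \<le> (1 / 4)\<^sup>2" by (rule power_mono[OF tt]) simp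
  then have "(d1 * d2)\<^sup>2 \<le> (2016 / 1000)\<^sup>2" unfolding prod by (simp add: power2_eq_square)
  then show "d1 * d2 \<le> 2016 / 1000" by (rule power2_le_imp_le) simp
  have "2\<^sup>2 \<le> (d1 * d2)\<^sup>2" unfolding prod by simp
  then show "2 \<le> d1 * d2" by (rule power2_le_imp_le) (simp add: d1_def d2_def)
qed

text \<open>\<open>B\<close> bounds \<open>|r - s\<^sub>i| + |g - s\<^sub>i| \<le> |r - g| + 2 |g - s\<^sub>i|\<close>, where \<open>|g - s\<^sub>i| \<le> 1.81 h\<close>.\<close>

lemma near_target_arith:
  fixes c s \<kappa> \<alpha> h R :: real
  assumes c: "99 / 100 \<le> c\<^sup>2" and \<kappa>: "0 \<le> \<kappa>" "\<kappa> \<le> 13 / 40"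
    and s: "0 \<le> s" "s \<le> \<alpha>" and \<alpha>: "\<alpha> \<le> 1 / 10" and R: "0 \<le> R" and h: "0 < h"
    and main: "c\<^sup>2 * R\<^sup>2 * (1 - \<kappa>\<^sup>2) \<le> s\<^sup>2 * (B\<^sup>2 + B\<^sup>2 + 2 * \<kappa> * B * B)"
    and B: "B = 362 / 100 * h + R"
  shows "R \<le> 77 / 10 * (\<alpha> * h)"
proof -
  have B0: "0 \<le> B" using B h R by simp
  have "(1 + \<kappa>) * (c\<^sup>2 * (1 - \<kappa>) * R\<^sup>2) \<le> (1 + \<kappa>) * (2 * s\<^sup>2 * B\<^sup>2)"
    using main by (simp add: power2_eq_square algebra_simps)
  then have m: "c\<^sup>2 * (1 - \<kappa>) * R\<^sup>2 \<le> 2 * s\<^sup>2 * B\<^sup>2" using \<kappa> by (simp add: mult_le_cancel_left_pos)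
  have "99 / 100 * (27 / 40) \<le> c\<^sup>2 * (1 - \<kappa>)" using c \<kappa> by (intro mult_mono) simp_all
  then have "(81 / 100 * R)\<^sup>2 \<le> c\<^sup>2 * (1 - \<kappa>) * R\<^sup>2"
    using mult_right_mono[of "6561 / 10000" "c\<^sup>2 * (1 - \<kappa>)" "R\<^sup>2"] by (simp add: power2_eq_square)
  also have "\<dots> \<le> 2 * s\<^sup>2 * B\<^sup>2" by (rule m)
  also have "\<dots> \<le> 20164 / 10000 * (s * B)\<^sup>2" by (simp add: power_mult_distrib)
  also have "\<dots> = (142 / 100 * (s * B))\<^sup>2" by (simp add: power2_eq_square)
  finally have "81 / 100 * R \<le> 142 / 100 * (s * B)"
    by (rule power2_le_imp_le) (use s B0 in simp)
  moreover have "s * B \<le> \<alpha> * B" using s B0 by (intro mult_right_mono) simp_all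
  moreover have "\<alpha> * R \<le> 1 / 10 * R" using \<alpha> R by (intro mult_right_mono) simp_all
  moreover have "0 \<le> \<alpha> * h" using s h by simp
  ultimately show ?thesis unfolding B by (simp add: algebra_simps)
qed

text \<open>\<open>h b\<^sub>i\<close> bounds \<open>|p - s\<^sub>i| + |q - s\<^sub>i|\<close> when \<open>|g - s\<^sub>i| = h d\<^sub>i\<close> and \<open>p, q\<close> lie within
  \<open>7.7\<alpha>h\<close> of \<open>g\<close>. After the bounds on \<open>d\<^sub>i\<close> the claim is a quartic inequality in \<open>\<alpha>\<close>.\<close>

lemma diameter_arith:
  fixes d1 d2 \<alpha> :: real
  assumes d: "d1\<^sup>2 + d2\<^sup>2 \<le> 9 / 2" "d1 + d2 \<le> 3" "d1 * d2 \<le> 2016 / 1000"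
    and \<alpha>: "0 < \<alpha>" "\<alpha> \<le> 1 / 10"
  defines "\<kappa> \<equiv> 1 / 8 + 2 * \<alpha>"
    and "b1 \<equiv> 2 * d1 + 154 / 10 * \<alpha>" and "b2 \<equiv> 2 * d2 + 154 / 10 * \<alpha>"
  shows "b1\<^sup>2 + b2\<^sup>2 + 2 * \<kappa> * b1 * b2 \<le> 99 / 100 * (1 - \<kappa>\<^sup>2) * (172 / 25)\<^sup>2 * (1 + 2 * \<alpha>)\<^sup>2"
proof -
  have k0: "0 \<le> \<kappa>" using \<alpha> by (simp add: \<kappa>_def)
  have sum: "\<alpha> * (d1 + d2) \<le> \<alpha> * 3" using d \<alpha> by (intro mult_left_mono) simp_all
  have "b1\<^sup>2 + b2\<^sup>2 + 2 * \<kappa> * b1 * b2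
      = 4 * (d1\<^sup>2 + d2\<^sup>2) + 616 / 10 * (\<alpha> * (d1 + d2)) + 47432 / 100 * \<alpha>\<^sup>2
        + 2 * \<kappa> * (4 * (d1 * d2) + 308 / 10 * (\<alpha> * (d1 + d2)) + 23716 / 100 * \<alpha>\<^sup>2)"
    unfolding b1_def b2_def by algebra
  also have "\<dots> \<le> 18 + 1848 / 10 * \<alpha> + 47432 / 100 * \<alpha>\<^sup>2
        + 2 * \<kappa> * (8064 / 1000 + 924 / 10 * \<alpha> + 23716 / 100 * \<alpha>\<^sup>2)"
    using d sum k0 by (intro add_mono mult_left_mono) simp_all
  also have "\<dots> \<le> 99 / 100 * (1 - \<kappa>\<^sup>2) * (172 / 25)\<^sup>2 * (1 + 2 * \<alpha>)\<^sup>2"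
  proof -
    have "\<alpha>\<^sup>2 \<le> \<alpha> / 10" "\<alpha> ^ 3 \<le> \<alpha>\<^sup>2 / 10" "\<alpha> ^ 4 \<le> \<alpha> ^ 3 / 10"
      using mult_left_mono[OF \<alpha>(2), of "\<alpha> ^ n" for n] \<alpha>(1)
      by (simp_all add: power2_eq_square power3_eq_cube power4_eq_xxxx)
    moreover have "99 / 100 * (1 - \<kappa>\<^sup>2) * (172 / 25)\<^sup>2 * (1 + 2 * \<alpha>)\<^sup>2
        - (18 + 1848 / 10 * \<alpha> + 47432 / 100 * \<alpha>\<^sup>2
           + 2 * \<kappa> * (8064 / 1000 + 924 / 10 * \<alpha> + 23716 / 100 * \<alpha>\<^sup>2))
      = 6528213 / 250000 - 988389 / 12500 * \<alpha> - 15622827 / 15625 * \<alpha>\<^sup>2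
        - 28002172 / 15625 * \<alpha> ^ 3 - 11715264 / 15625 * \<alpha> ^ 4"
      unfolding \<kappa>_def by algebra
    ultimately show ?thesis using \<alpha> by linarith
  qed
  finally show ?thesis .
qed

locale camera_pair =
  fixes h \<alpha> t :: real and g s1 s2 u1 u2 :: pt
  assumes h: "0 < h" and \<alpha>: "0 < \<alpha>" "\<alpha> \<le> 1 / 10" and t: "\<bar>t\<bar> \<le> 1 / 2"
    and s1: "g - s1 = ((t + 1) * h, - h)" and s2: "g - s2 = ((t - 1) * h, - h)"
    and u1: "norm u1 = 1" and u2: "norm u2 = 1"
    and g1: "g \<in> wedge \<alpha> s1 u1" and g2: "g \<in> wedge \<alpha> s2 u2"
begin

lemma alpha_range: "0 \<le> \<alpha>" "\<alpha> < pi / 2" "\<alpha> \<le> pi"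
  using \<alpha> pi_gt3 by linarith+

lemma norm_target_minus_cameras:
  "norm (g - s1) = h * sqrt ((t + 1)\<^sup>2 + 1)" "norm (g - s2) = h * sqrt ((t - 1)\<^sup>2 + 1)"
proof -
  have "norm ((x * h, - h) :: pt) = h * sqrt (x\<^sup>2 + 1)" for x
  proof -
    have "norm ((x * h, - h) :: pt) = sqrt (h\<^sup>2 * (x\<^sup>2 + 1))"
      by (simp add: norm_pt power_mult_distrib algebra_simps)
    then show ?thesis using h by (simp add: real_sqrt_mult)
  qed
  then show "norm (g - s1) = h * sqrt ((t + 1)\<^sup>2 + 1)" "norm (g - s2) = h * sqrt ((t - 1)\<^sup>2 + 1)"
    unfolding s1 s2 by simp_all
qed

lemma abs_inner_axes_le: "\<bar>inner u1 u2\<bar> \<le> 1 / 8 + 2 * \<alpha>"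
proof -
  define d1 where "d1 = sqrt ((t + 1)\<^sup>2 + 1)"
  define d2 where "d2 = sqrt ((t - 1)\<^sup>2 + 1)"
  note d = camera_distance_bounds[OF t, folded d1_def d2_def]
  note n = norm_target_minus_cameras[folded d1_def d2_def]
  have "0 < h * d1" "0 < h * d2" using h d by simp_all
  then have "g \<noteq> s1" "g \<noteq> s2" using n by auto
  then have near: "norm (u1 - sgn (g - s1)) \<le> \<alpha>" "norm (u2 - sgn (g - s2)) \<le> \<alpha>"
    using g1 g2 alpha_range by (simp_all add: wedge_axis_near_direction u1 u2)
  have "inner (g - s1) (g - s2) = t\<^sup>2 * h\<^sup>2"
    unfolding s1 s2 by (simp add: inner_pt power2_eq_square algebra_simps)
  moreover have "inner (sgn v) (sgn w) = inner v w / (norm v * norm w)" for v w :: pt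
    by (simp add: sgn_div_norm divide_inverse inverse_mult_distrib mult_ac)
  ultimately have e: "inner (sgn (g - s1)) (sgn (g - s2)) = t\<^sup>2 / (d1 * d2)"
    using h by (simp add: n power2_eq_square)
  have "t\<^sup>2 / (d1 * d2) \<le> t\<^sup>2 / 2" using d by (intro divide_left_mono) simp_all
  also have "\<dots> \<le> 1 / 8" using power_mono[OF t, of 2] by (simp add: power2_eq_square)
  finally have "\<bar>inner (sgn (g - s1)) (sgn (g - s2))\<bar> \<le> 1 / 8" using d by (simp add: e)
  moreover have "norm (sgn (g - s1)) = 1" using \<open>g \<noteq> s1\<close> by (simp add: norm_sgn)
  ultimately show ?thesis using abs_inner_perturb[OF u2 _ near] by linarith
qed

lemma wedge_inter_near_target:
  assumes r1: "r \<in> wedge \<alpha> s1 u1" and r2: "r \<in> wedge \<alpha> s2 u2"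
  shows "norm (r - g) \<le> 77 / 10 * (\<alpha> * h)"
proof -
  define R where "R = norm (r - g)"
  define B where "B = 362 / 100 * h + R"
  have "norm (g - s1) \<le> 181 / 100 * h" "norm (g - s2) \<le> 181 / 100 * h"
    using camera_distance_bounds(3,4)[OF t] h by (simp_all add: norm_target_minus_cameras)
  moreover have "norm (r - s1) \<le> R + norm (g - s1)" "norm (r - s2) \<le> R + norm (g - s2)"
    using norm_triangle_ineq[of "r - g" "g - s1"] norm_triangle_ineq[of "r - g" "g - s2"]
    by (simp_all add: R_def)
  ultimately have "norm (r - s1) + norm (g - s1) \<le> B" "norm (r - s2) + norm (g - s2) \<le> B"
    by (simp_all add: B_def)
  from two_wedges_dist_le[OF u1 u2 abs_inner_axes_le alpha_range(1,2) r1 g1 r2 g2 this]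
  have main: "(cos \<alpha>)\<^sup>2 * R\<^sup>2 * (1 - (1 / 8 + 2 * \<alpha>)\<^sup>2)
      \<le> (sin \<alpha>)\<^sup>2 * (B\<^sup>2 + B\<^sup>2 + 2 * (1 / 8 + 2 * \<alpha>) * B * B)"
    by (simp add: R_def norm_minus_commute)
  have R0: "0 \<le> R" by (simp add: R_def)
  show ?thesis unfolding R_def[symmetric] using small_angle_bounds[OF \<alpha>] \<alpha>
    by (intro near_target_arith[OF _ _ _ _ _ _ R0 h main B_def]) auto
qed

lemma wedge_inter_diameter_le:
  assumes p: "p \<in> wedge \<alpha> s1 u1" "p \<in> wedge \<alpha> s2 u2" and q: "q \<in> wedge \<alpha> s1 u1" "q \<in> wedge \<alpha> s2 u2"
  shows "norm (q - p) \<le> 172 / 100 * (4 * \<alpha> * h * (1 + 2 * \<alpha>))"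
proof -
  define \<kappa> where "\<kappa> = 1 / 8 + 2 * \<alpha>"
  define d1 where "d1 = sqrt ((t + 1)\<^sup>2 + 1)"
  define d2 where "d2 = sqrt ((t - 1)\<^sup>2 + 1)"
  define b1 where "b1 = 2 * d1 + 154 / 10 * \<alpha>"
  define b2 where "b2 = 2 * d2 + 154 / 10 * \<alpha>"
  define T where "T = 172 / 100 * (4 * \<alpha> * h * (1 + 2 * \<alpha>))"
  note d = camera_distance_bounds[OF t, folded d1_def d2_def]
  note n = norm_target_minus_cameras[folded d1_def d2_def]
  have "\<kappa> * \<kappa> \<le> 13 / 40 * 1" using \<alpha> by (intro mult_mono) (simp_all add: \<kappa>_def)
  then have \<kappa>: "0 < 1 - \<kappa>\<^sup>2" by (simp add: power2_eq_square)
  have near: "norm (p - g) \<le> 77 / 10 * (\<alpha> * h)" "norm (q - g) \<le> 77 / 10 * (\<alpha> * h)"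
    using wedge_inter_near_target p q by blast+
  have tri: "norm (p - s) + norm (q - s) \<le> norm (p - g) + norm (q - g) + 2 * norm (g - s)" for s
    using norm_triangle_ineq[of "p - g" "g - s"] norm_triangle_ineq[of "q - g" "g - s"] by simp
  have "norm (p - s1) + norm (q - s1) \<le> h * b1" "norm (p - s2) + norm (q - s2) \<le> h * b2"
    using tri[of s1] tri[of s2] near by (simp_all add: n b1_def b2_def algebra_simps)
  from two_wedges_dist_le[OF u1 u2 abs_inner_axes_le[folded \<kappa>_def] alpha_range(1,2) p(1) q(1) p(2) q(2) this]
  have "(cos \<alpha>)\<^sup>2 * (norm (q - p))\<^sup>2 * (1 - \<kappa>\<^sup>2)
      \<le> (sin \<alpha>)\<^sup>2 * ((h * b1)\<^sup>2 + (h * b2)\<^sup>2 + 2 * \<kappa> * (h * b1) * (h * b2))" .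
  also have "\<dots> = (sin \<alpha>)\<^sup>2 * h\<^sup>2 * (b1\<^sup>2 + b2\<^sup>2 + 2 * \<kappa> * b1 * b2)"
    by (simp add: power2_eq_square algebra_simps)
  also have "\<dots> \<le> \<alpha>\<^sup>2 * h\<^sup>2 * (99 / 100 * (1 - \<kappa>\<^sup>2) * (172 / 25)\<^sup>2 * (1 + 2 * \<alpha>)\<^sup>2)"
  proof -
    have "0 \<le> b1" "0 \<le> b2" "0 \<le> \<kappa>" using d \<alpha> by (simp_all add: b1_def b2_def \<kappa>_def)
    then have "0 \<le> b1\<^sup>2 + b2\<^sup>2 + 2 * \<kappa> * b1 * b2" by simp
    then show ?thesis
      using small_angle_bounds[OF \<alpha>] diameter_arith[OF d(5,6,8) \<alpha>, folded \<kappa>_def b1_def b2_def] h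
      by (intro mult_mono power_mono) simp_all
  qed
  also have "\<dots> = 99 / 100 * T\<^sup>2 * (1 - \<kappa>\<^sup>2)" by (simp add: T_def power2_eq_square)
  also have "\<dots> \<le> (cos \<alpha>)\<^sup>2 * T\<^sup>2 * (1 - \<kappa>\<^sup>2)"
    using small_angle_bounds(3)[OF \<alpha>] \<kappa> by (intro mult_right_mono) simp_all
  finally have "((cos \<alpha>)\<^sup>2 * (1 - \<kappa>\<^sup>2)) * (norm (q - p))\<^sup>2 \<le> ((cos \<alpha>)\<^sup>2 * (1 - \<kappa>\<^sup>2)) * T\<^sup>2"
    by (simp only: mult_ac)
  moreover have "0 < (cos \<alpha>)\<^sup>2 * (1 - \<kappa>\<^sup>2)"
    using small_angle_bounds(3)[OF \<alpha>] \<kappa> by (intro mult_pos_pos) auto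
  ultimately have "(norm (q - p))\<^sup>2 \<le> T\<^sup>2" by (metis mult_le_cancel_left_pos)
  then show ?thesis unfolding T_def[symmetric] by (rule power2_le_imp_le) (use \<alpha> h in \<open>simp add: T_def\<close>)
qed

end

theorem theorem3:
  fixes h \<alpha> :: real and g :: pt
  assumes "h > 0" and "0 < \<alpha>" and "\<alpha> \<le> 1/10" and "g \<in> ground"
  shows "\<exists>si\<in>grid h. \<exists>sj\<in>grid h.
           eps \<alpha> g {si, sj} \<le> ereal (172/100) * eps \<alpha> g (viewline h)"
proof -
  obtain a where ga: "g = (a, 0)" using assms(4) by (cases g) (auto simp: ground_def)
  define k where "k = \<lfloor>a / h + 1 / 2\<rfloor>"
  define t where "t = a / h - k"
  define si :: pt where "si = (of_int (k - 1) * h, h)"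
  define sj :: pt where "sj = (of_int (k + 1) * h, h)"
  have t: "\<bar>t\<bar> \<le> 1 / 2"
    using of_int_floor_le[of "a / h + 1 / 2"] real_of_int_floor_add_one_gt[of "a / h + 1 / 2"]
    unfolding t_def k_def by linarith
  have "a = (t + k) * h" using assms(1) by (simp add: t_def field_simps)
  then have "g - si = ((t + 1) * h, - h)" "g - sj = ((t - 1) * h, - h)"
    by (simp_all add: ga si_def sj_def algebra_simps)
  then have "eps \<alpha> g {si, sj} \<le> ereal (172 / 100 * (4 * \<alpha> * h * (1 + 2 * \<alpha>)))"
    using camera_pair.wedge_inter_diameter_le[of h \<alpha> t g si sj] assms t
    by (intro eps_pair_le) (simp add: camera_pair_def dist_norm)
  also have "\<dots> = ereal (172 / 100) * ereal (4 * \<alpha> * h * (1 + 2 * \<alpha>))" by simp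
  also have "\<dots> \<le> ereal (172 / 100) * eps \<alpha> g (viewline h)"
  proof (rule ereal_mult_left_mono)
    show "ereal (4 * \<alpha> * h * (1 + 2 * \<alpha>)) \<le> eps \<alpha> g (viewline h)"
      by (rule eps_viewline_ge[OF assms(1,2) _ assms(4)]) (use assms(3) pi_gt3 in linarith)
  qed simp
  finally show ?thesis unfolding grid_def si_def sj_def by blast
qed

end
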